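(* Let $D$ be a squarefree integer and $p>3$ a prime not dividing $D$. Then the reductions modulo $p$ of the equations $X_0^2-2X_1^2+X_2^2=0$, $X_1^2-2X_2^2+DX_3^2=0$, $X_2^2-2DX_3^2+X_4^2=0$ define a smooth curve over $\mathbb{F}_p$; i.e. $C_D$ has good reduction at $p$ with these equations.
   Context: $C_D\subset\mathbb{P}^4$ is the curve over $\mathbb{Q}$ defined by these three equations. *)

theory Defs
  imports "HOL-Computational_Algebra.Computational_Algebra"
begin

text \<open>The three quadrics defining C_D in P^4, with integer coefficients interpreted
  in an arbitrary field K (i.e. reduced modulo CHAR(K)). A point is x :: nat \<Rightarrow> K,
  with homogeneous coordinates x 0, ..., x 4.\<close>

definition CD_F1 :: "int \<Rightarrow> (nat \<Rightarrow> 'k::field) \<Rightarrow> 'k" where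
  "CD_F1 D x = (x 0)^2 - 2 * (x 1)^2 + (x 2)^2"

definition CD_F2 :: "int \<Rightarrow> (nat \<Rightarrow> 'k::field) \<Rightarrow> 'k" where
  "CD_F2 D x = (x 1)^2 - 2 * (x 2)^2 + of_int D * (x 3)^2"

definition CD_F3 :: "int \<Rightarrow> (nat \<Rightarrow> 'k::field) \<Rightarrow> 'k" where
  "CD_F3 D x = (x 2)^2 - 2 * of_int D * (x 3)^2 + (x 4)^2"

definition CD_dF :: "nat \<Rightarrow> int \<Rightarrow> (nat \<Rightarrow> 'k::field) \<Rightarrow> nat \<Rightarrow> 'k" where
  "CD_dF j D x i =
     (if j = 1 then [2 * x 0, - 4 * x 1, 2 * x 2, 0, 0] ! i
      else if j = 2 then [0, 2 * x 1, - 4 * x 2, 2 * of_int D * x 3, 0] ! i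
      else [0, 0, 2 * x 2, - 4 * of_int D * x 3, 2 * x 4] ! i)"

definition on_CD :: "int \<Rightarrow> (nat \<Rightarrow> 'k::field) \<Rightarrow> bool" where
  "on_CD D x \<longleftrightarrow> (\<exists>i<5. x i \<noteq> 0) \<and> CD_F1 D x = 0 \<and> CD_F2 D x = 0 \<and> CD_F3 D x = 0"

definition CD_jacobian_rank3 :: "int \<Rightarrow> (nat \<Rightarrow> 'k::field) \<Rightarrow> bool" where
  "CD_jacobian_rank3 D x \<longleftrightarrow>
     (\<forall>a b c :: 'k. (\<forall>i<5. a * CD_dF 1 D x i + b * CD_dF 2 D x i + c * CD_dF 3 D x i = 0)
        \<longrightarrow> a = 0 \<and> b = 0 \<and> c = 0)"

end

theory Submission
  imports Defs
begin

text \<open>The weighted squares \<open>x\<^sub>0\<^sup>2, x\<^sub>1\<^sup>2, x\<^sub>2\<^sup>2, D x\<^sub>3\<^sup>2, x\<^sub>4\<^sup>2\<close> of a point of \<open>C\<^sub>D\<close> have vanishing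
  second differences, so they form an arithmetic progression of length five. When
  \<open>1, \<dots>, 4\<close> are invertible and \<open>D\<close> is a unit, such a progression with two zeros vanishes
  identically, so at most one coordinate of a point of \<open>C\<^sub>D\<close> is zero. A relation
  \<open>a dF\<^sub>1 + b dF\<^sub>2 + c dF\<^sub>3 = 0\<close> among the rows of the Jacobian has \<open>i\<close>-th entry a unit
  multiple of \<open>x\<^sub>i\<close> times the \<open>i\<close>-th entry of \<open>(a, b - 2a, a - 2b + c, b - 2c, c)\<close>;
  four of these five entries therefore vanish, which forces \<open>a = b = c = 0\<close>.\<close>

lemma of_nat_neq_0_below_CHAR:
  assumes "0 < n" "n < CHAR('a::semiring_1)"
  shows "of_nat n \<noteq> (0::'a)"
  using assms by (auto simp: of_nat_eq_0_iff_char_dvd dest: dvd_imp_le)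

lemma second_differences_zero_imp_arith_prog:
  fixes y :: "nat \<Rightarrow> 'a::comm_ring_1"
  assumes "\<And>k. k + 2 \<le> n \<Longrightarrow> y k - 2 * y (k + 1) + y (k + 2) = 0"
  shows "k \<le> n \<Longrightarrow> y k = y 0 + of_nat k * (y 1 - y 0)"
proof (induction k rule: less_induct)
  case (less k)
  show ?case
  proof (cases k)
    case (Suc k')
    show ?thesis
    proof (cases k')
      case (Suc j)
      have IH: "y j = y 0 + of_nat j * (y 1 - y 0)" "y (j + 1) = y 0 + of_nat (j + 1) * (y 1 - y 0)"
        using less.IH[of j] less.IH[of "j + 1"] less.prems \<open>k = Suc k'\<close> \<open>k' = Suc j\<close> by simp_all
      have "y (j + 2) = 2 * y (j + 1) - y j"
        using assms[of j] less.prems \<open>k = Suc k'\<close> \<open>k' = Suc j\<close>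
        by (simp add: algebra_simps eq_neg_iff_add_eq_0)
      also have "\<dots> = y 0 + of_nat (j + 2) * (y 1 - y 0)"
        unfolding IH by (simp add: algebra_simps)
      finally show ?thesis
        using \<open>k = Suc k'\<close> \<open>k' = Suc j\<close> by (simp add: numeral_2_eq_2)
    qed (use \<open>k = Suc k'\<close> in simp)
  qed simp
qed

lemma arith_prog_two_zeros:
  fixes u v :: "'a::idom"
  assumes "u + of_nat i * v = 0" "u + of_nat j * v = 0" "i < j" "of_nat (j - i) \<noteq> (0::'a)"
  shows "u = 0 \<and> v = 0"
proof -
  have "of_nat (j - i) * v = of_nat j * v - of_nat i * v"
    using assms(3) by (simp add: of_nat_diff algebra_simps)
  also have "\<dots> = 0"
    using assms(1,2) by (metis add_left_cancel diff_self)
  finally have "v = 0"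
    using assms(4) by simp
  then show ?thesis
    using assms(1) by simp
qed

definition CD_weighted_squares :: "int \<Rightarrow> (nat \<Rightarrow> 'k::field) \<Rightarrow> nat \<Rightarrow> 'k" where
  "CD_weighted_squares D x i = (if i = 3 then of_int D * (x 3)^2 else (x i)^2)"

lemma CD_weighted_squares_second_differences:
  assumes "CD_F1 D x = 0" "CD_F2 D x = 0" "CD_F3 D x = 0" "k + 2 \<le> 4"
  shows "CD_weighted_squares D x k - 2 * CD_weighted_squares D x (k + 1)
      + CD_weighted_squares D x (k + 2) = 0"
  using assms
  by (auto simp: CD_weighted_squares_def CD_F1_def CD_F2_def CD_F3_def le_Suc_eq
      numeral_eq_Suc mult.assoc)

lemma on_CD_zero_coordinate_unique:
  fixes x :: "nat \<Rightarrow> 'k::field"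
  assumes on: "on_CD D x" and char: "CHAR('k) > 4" and D: "of_int D \<noteq> (0::'k)"
    and "i < 5" "j < 5" "x i = 0" "x j = 0"
  shows "i = j"
proof (rule ccontr)
  assume "i \<noteq> j"
  define y where "y = CD_weighted_squares D x"
  have F: "CD_F1 D x = 0" "CD_F2 D x = 0" "CD_F3 D x = 0"
    using on by (auto simp: on_CD_def)
  have diffs: "y k - 2 * y (k + 1) + y (k + 2) = 0" if "k + 2 \<le> 4" for k
    unfolding y_def using F that by (rule CD_weighted_squares_second_differences)
  have y_prog: "y k = y 0 + of_nat k * (y 1 - y 0)" if "k < 5" for k
    using that by (intro second_differences_zero_imp_arith_prog[where n = 4, OF diffs]) simp_all
  have y_zero: "y k = 0" if "k < 5" "x k = 0" for k
    using that by (cases "k = 3") (simp_all add: y_def CD_weighted_squares_def)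
  have invertible: "of_nat (m - l) \<noteq> (0::'k)" if "l < m" "m < 5" for l m
    using of_nat_neq_0_below_CHAR[of "m - l", where 'a='k] that char by simp
  obtain l n where "l < n" "n < 5" "x l = 0" "x n = 0"
    using assms(4-7) \<open>i \<noteq> j\<close> by (meson linorder_neqE_nat)
  then have "y 0 + of_nat l * (y 1 - y 0) = 0" "y 0 + of_nat n * (y 1 - y 0) = 0"
    using y_prog[of l] y_prog[of n] y_zero[of l] y_zero[of n] by simp_all
  then have "y 0 = 0 \<and> y 1 - y 0 = 0"
    by (rule arith_prog_two_zeros[OF _ _ \<open>l < n\<close> invertible[OF \<open>l < n\<close> \<open>n < 5\<close>]])
  then have y_vanishes: "y k = 0" if "k < 5" for k
    using y_prog[OF that] by simp
  have "x k = 0" if "k < 5" for k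
    using y_vanishes[OF that] D by (auto simp: y_def CD_weighted_squares_def split: if_splits)
  then show False
    using on by (auto simp: on_CD_def)
qed

definition second_difference_transpose :: "'k::field \<Rightarrow> 'k \<Rightarrow> 'k \<Rightarrow> 'k list" where
  "second_difference_transpose a b c = [a, b - 2 * a, a - 2 * b + c, b - 2 * c, c]"

lemma CD_dF_combination:
  assumes "i < 5"
  shows "a * CD_dF 1 D x i + b * CD_dF 2 D x i + c * CD_dF 3 D x i
    = (if i = 3 then 2 * of_int D else 2) * x i * second_difference_transpose a b c ! i"
  using assms
  by (auto simp: CD_dF_def second_difference_transpose_def less_Suc_eq numeral_eq_Suc algebra_simps)

lemma second_difference_transpose_eq_0:
  fixes a b c :: "'k::field"
  assumes two: "(2::'k) \<noteq> 0" and "\<And>i. i < 5 \<Longrightarrow> i \<noteq> m \<Longrightarrow> second_difference_transpose a b c ! i = 0"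
  shows "a = 0 \<and> b = 0 \<and> c = 0"
proof -
  have w: "second_difference_transpose a b c ! i = 0" if "i < 5" "i \<noteq> m" for i
    using assms(2) that by blast
  have e0: "m \<noteq> 0 \<Longrightarrow> a = 0" and e1: "m \<noteq> 1 \<Longrightarrow> b = 2 * a"
    and e2: "m \<noteq> 2 \<Longrightarrow> c = 2 * b - a" and e3: "m \<noteq> 3 \<Longrightarrow> b = 2 * c"
    and e4: "m \<noteq> 4 \<Longrightarrow> c = 0"
    using w[of 0] w[of 1] w[of 2] w[of 3] w[of 4]
    by (simp_all add: second_difference_transpose_def algebra_simps)
  consider "m = 0" | "m = 1" | "m = 2" | "m \<notin> {0, 1, 2}"
    by blast
  then show ?thesis
  proof cases
    case 1
    then have "c = 0" "b = 0"
      using e3 e4 by simp_all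
    then show ?thesis
      using e1 two \<open>m = 0\<close> by simp
  next
    case 2
    then show ?thesis
      using e0 e3 e4 by simp
  next
    case 3
    then show ?thesis
      using e0 e1 e4 by simp
  next
    case 4
    then show ?thesis
      using e0 e1 e2 by simp
  qed
qed

theorem lemma4p3:
  fixes D :: int and p :: nat
  assumes "squarefree D" and "prime p" and "p > 3" and "\<not> int p dvd D"
    and "CHAR('k::field) = p"
  shows "\<forall>x :: nat \<Rightarrow> 'k. on_CD D x \<longrightarrow> CD_jacobian_rank3 D x"
proof (intro allI impI)
  fix x :: "nat \<Rightarrow> 'k"
  assume on: "on_CD D x"
  have char: "CHAR('k) > 4"
    using assms(2,3,5) by (cases "p = 4") auto
  have two: "(2::'k) \<noteq> 0"
    using of_nat_neq_0_below_CHAR[of 2, where 'a='k] char by simp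
  have D: "of_int D \<noteq> (0::'k)"
    using assms(4,5) by (simp add: of_int_eq_0_iff_char_dvd)
  obtain m where nonzero: "\<And>i. i < 5 \<Longrightarrow> i \<noteq> m \<Longrightarrow> x i \<noteq> 0"
    using on_CD_zero_coordinate_unique[OF on char D] by blast
  show "CD_jacobian_rank3 D x"
    unfolding CD_jacobian_rank3_def
  proof (intro allI impI)
    fix a b c :: 'k
    assume relation: "\<forall>i<5. a * CD_dF 1 D x i + b * CD_dF 2 D x i + c * CD_dF 3 D x i = 0"
    have "second_difference_transpose a b c ! i = 0" if "i < 5" "i \<noteq> m" for i
      using relation[rule_format, OF \<open>i < 5\<close>] nonzero[OF that] two D
      unfolding CD_dF_combination[OF \<open>i < 5\<close>] by (auto split: if_splits)
    then show "a = 0 \<and> b = 0 \<and> c = 0"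
      using second_difference_transpose_eq_0[OF two] by blast
  qed
qed

end
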